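(* Let $\tau\in F_2$ and let $[a,b]$ be $[(\tfrac12,0),(0,0)]$ or $[(\tfrac12,0),(0,\tfrac12)]$. Then $$|\theta_{a,b}(0,\tau)|\,e^{\pi\,{}^ta\operatorname{Im}\tau\,a}\ge 4-\Big(1+\Big(1+\tfrac{\sqrt6}{\sqrt{\operatorname{Im}\tau_1}}\Big)e^{-\pi\operatorname{Im}\tau_1/6}\Big)\Big(2+\Big(1+\tfrac{2}{\sqrt{\operatorname{Im}\tau_2}}\Big)e^{-\pi\operatorname{Im}\tau_2/4}\Big)-\Big(1+\Big(2+\tfrac{\sqrt2}{\sqrt{\operatorname{Im}\tau_2}}\Big)e^{-\pi\operatorname{Im}\tau_2/2}\Big)-e^{-\pi\operatorname{Im}\tau_2}-\Big(1+\Big(1+\tfrac{\sqrt2}{\sqrt{\operatorname{Im}\tau_2}}\Big)e^{-\pi\operatorname{Im}\tau_2/2}\Big)e^{-2\pi\operatorname{Im}\tau_1},$$ and this bound is positive when $\operatorname{Im}\tau_1\ge4$. The same bound, with $\tau_1$ and $\tau_2$ exchanged, holds for the characteristics $[(0,\tfrac12),(0,0)]$ and $[(0,\tfrac12),(\tfrac12,0)]$.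
   Context: $F_2$ is the standard Siegel fundamental domain for $\mathrm{Sp}_4(\mathbb{Z})$ acting on symmetric complex $2\times2$ matrices $\tau=\begin{pmatrix}\tau_1&\tau_{12}\\ \tau_{12}&\tau_2\end{pmatrix}$ with $\operatorname{Im}\tau>0$; every $\tau\in F_2$ satisfies $|\operatorname{Re}\tau_{ij}|\le 1/2$, $\operatorname{Im}\tau_2\ge\operatorname{Im}\tau_1\ge 2\operatorname{Im}\tau_{12}\ge 0$, $\operatorname{Im}\tau_1\ge\sqrt3/2$. $\theta_{a,b}(Z,\tau)=\sum_{n\in\mathbb{Z}^2}\exp\big(2i\pi(\tfrac12{}^t(n+a)\tau(n+a)+{}^t(n+a)(Z+b))\big)$. *)

theory Defs
  imports "HOL-Analysis.Analysis"
begin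

definition Im_mat :: "complex^2^2 \<Rightarrow> real^2^2" where
  "Im_mat \<tau> = (\<chi> i j. Im (\<tau> $ i $ j))"

definition Re_mat :: "complex^2^2 \<Rightarrow> real^2^2" where
  "Re_mat \<tau> = (\<chi> i j. Re (\<tau> $ i $ j))"

definition cmat_of_int :: "int^2^2 \<Rightarrow> complex^2^2" where
  "cmat_of_int M = (\<chi> i j. of_int (M $ i $ j))"

definition siegel_H2 :: "(complex^2^2) set" where
  "siegel_H2 = {\<tau>. transpose \<tau> = \<tau> \<and>
      (\<forall>x::real^2. x \<noteq> 0 \<longrightarrow> x \<bullet> (Im_mat \<tau> *v x) > 0)}"

text \<open>Block description (A B; C D) of Sp_4(Z): M^T J M = J, equivalently
  A^T C and B^T D symmetric and A^T D - C^T B = I.\<close>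
definition is_Sp4Z :: "int^2^2 \<Rightarrow> int^2^2 \<Rightarrow> int^2^2 \<Rightarrow> int^2^2 \<Rightarrow> bool" where
  "is_Sp4Z A B C D \<longleftrightarrow>
      transpose A ** C = transpose C ** A \<and>
      transpose B ** D = transpose D ** B \<and>
      transpose A ** D - transpose C ** B = mat 1"

definition F2 :: "(complex^2^2) set" where
  "F2 = {\<tau> \<in> siegel_H2.
      (\<forall>i j. \<bar>Re (\<tau> $ i $ j)\<bar> \<le> 1/2) \<and>
      Im (\<tau> $ 2 $ 2) \<ge> Im (\<tau> $ 1 $ 1) \<and>
      Im (\<tau> $ 1 $ 1) \<ge> 2 * Im (\<tau> $ 1 $ 2) \<and>
      Im (\<tau> $ 1 $ 2) \<ge> 0 \<and>
      (\<forall>A B C D. is_Sp4Z A B C D \<longrightarrow> cmod (det (cmat_of_int C ** \<tau> + cmat_of_int D)) \<ge> 1)}"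

definition theta_char :: "real^2 \<Rightarrow> real^2 \<Rightarrow> complex^2 \<Rightarrow> complex^2^2 \<Rightarrow> complex" where
  "theta_char a b Z \<tau> = infsum (\<lambda>n::int^2.
      let v = (\<chi> i. complex_of_real (of_int (n $ i) + a $ i)) in
      exp (2 * \<i> * of_real pi *
        ((1/2) * (\<Sum>i\<in>UNIV. \<Sum>j\<in>UNIV. v $ i * \<tau> $ i $ j * v $ j)
         + (\<Sum>i\<in>UNIV. v $ i * (Z $ i + complex_of_real (b $ i)))))) UNIV"

definition vec2 :: "real \<Rightarrow> real \<Rightarrow> real^2" where
  "vec2 x y = (\<chi> i. if i = 1 then x else y)"

definition theta_lower_bound :: "real \<Rightarrow> real \<Rightarrow> real" where
  "theta_lower_bound y1 y2 =
     4 - (1 + (1 + sqrt 6 / sqrt y1) * exp (- pi * y1 / 6))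
         * (2 + (1 + 2 / sqrt y2) * exp (- pi * y2 / 4))
       - (1 + (2 + sqrt 2 / sqrt y2) * exp (- pi * y2 / 2))
       - exp (- pi * y2)
       - (1 + (1 + sqrt 2 / sqrt y2) * exp (- pi * y2 / 2)) * exp (- 2 * pi * y1)"

end

theory Submission
  imports Defs
begin

text \<open>
  Write the theta value as a sum over \<open>n \<in> \<int>\<^sup>2\<close> and normalise it by
  \<open>exp (\<pi> a\<^sup>T Y a)\<close>, \<open>Y = Im \<tau>\<close>.  For \<open>a = (1/2, 0)\<close> the terms at \<open>n = (0,0)\<close> and
  \<open>n = (-1,0)\<close> coincide (since \<open>b\<^sub>1 = 0\<close>) and have modulus \<open>1\<close>; for reduced \<open>Y\<close> the
  modulus of every normalised term is bounded by a product \<open>\<phi>(n\<^sub>1) \<psi>(n\<^sub>2)\<close> of geometric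
  majorants.  When the total mass \<open>\<Phi> \<Psi>\<close> of the majorant is at most \<open>3\<close>, the two dominant
  terms contribute \<open>2\<close> and the rest at most \<open>1\<close>, so the normalised theta value has modulus
  at least \<open>1\<close>.  This happens as soon as \<open>Y\<^sub>1\<^sub>1 \<ge> 3/2\<close>; the characteristic \<open>a = (0, 1/2)\<close>
  is treated in the same way, with the dominant pair \<open>(0,0), (0,-1)\<close>.  On the other hand,
  the explicit bound of the theorem never exceeds \<open>1\<close>, and it is non-positive in the
  complementary range of \<open>Y\<close>, where the claim is trivial.  Positivity of the bound for
  \<open>Y\<^sub>1\<^sub>1 \<ge> 4\<close> is a direct numerical estimate.
\<close>

lemma has_sum_int_split:
  fixes f :: "int \<Rightarrow> 'a::topological_comm_monoid_add"
  assumes pos: "((\<lambda>k. f (int k)) has_sum A) UNIV"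
    and neg: "((\<lambda>k. f (- int k - 1)) has_sum B) UNIV"
  shows "(f has_sum (A + B)) UNIV"
proof -
  have "(f has_sum A) {m. 0 \<le> m}"
    using pos has_sum_reindex_bij_witness[of UNIV nat int "{m. 0 \<le> m}" f "\<lambda>k. f (int k)" A A]
    by auto
  moreover have "(f has_sum B) {m. m < 0}"
    using neg has_sum_reindex_bij_witness[of UNIV "\<lambda>m. nat (- m - 1)" "\<lambda>k. - int k - 1"
        "{m. m < 0}" f "\<lambda>k. f (- int k - 1)" B B]
    by auto
  ultimately have "(f has_sum (A + B)) ({m. 0 \<le> m} \<union> {m. m < 0})"
    by (rule has_sum_Un_disjoint) auto
  moreover have "{m::int. 0 \<le> m} \<union> {m. m < 0} = UNIV" by auto
  ultimately show ?thesis by simp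
qed

lemma has_sum_int2_product:
  fixes \<phi> \<psi> :: "int \<Rightarrow> real"
  assumes "(\<phi> has_sum \<Phi>) UNIV" "(\<psi> has_sum \<Psi>) UNIV" "\<And>m. 0 \<le> \<phi> m" "\<And>m. 0 \<le> \<psi> m"
  shows "((\<lambda>n::int^2. \<phi> (n$1) * \<psi> (n$2)) has_sum (\<Phi> * \<Psi>)) UNIV"
proof -
  let ?h = "\<lambda>p::int \<times> int. \<phi> (fst p) * \<psi> (snd p)"
  have rows: "((\<lambda>y. ?h (x, y)) has_sum \<phi> x * \<Psi>) UNIV" for x
    using assms(2) by (simp add: has_sum_cmult_right)
  have cols: "((\<lambda>x. \<phi> x * \<Psi>) has_sum \<Phi> * \<Psi>) UNIV"
    using assms(1) by (simp add: has_sum_cmult_left)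
  have "?h summable_on UNIV \<times> UNIV"
    using summable_on_SigmaI[of UNIV ?h "\<lambda>_. UNIV" "\<lambda>x. \<phi> x * \<Psi>"] rows cols assms(3,4)
    by (auto simp: summable_on_def)
  then have "(?h has_sum (\<Phi> * \<Psi>)) (UNIV \<times> UNIV)"
    using has_sum_SigmaI[of UNIV ?h "\<lambda>_. UNIV" "\<lambda>x. \<phi> x * \<Psi>" "\<Phi> * \<Psi>"] rows cols
    by (auto simp: case_prod_unfold)
  then show ?thesis
    by (subst has_sum_reindex_bij_witness[of UNIV "\<lambda>p. \<chi> i. if i = 1 then fst p else snd p"
          "\<lambda>n. (n$1, n$2)" "UNIV \<times> UNIV" ?h])
       (auto simp: vec_eq_iff forall_2)
qed

text \<open>Two equal unimodular terms dominate a series: if \<open>\<bar>f\<bar>\<close> is bounded by a majorant of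
  total mass \<open>S\<close> which equals \<open>1\<close> at two points where \<open>f\<close> takes the same unimodular value,
  then the rest has modulus at most \<open>S - 2\<close>, so \<open>\<bar>\<Sum> f\<bar> \<ge> 2 - (S - 2)\<close>.\<close>
lemma norm_infsum_ge_two_dominant_terms:
  fixes f :: "'a \<Rightarrow> 'b::banach" and M :: "'a \<Rightarrow> real"
  assumes M_sum: "(M has_sum S) UNIV" and f_le: "\<And>n. norm (f n) \<le> M n"
    and "p \<noteq> q" and "f p = f q" and "norm (f p) = 1" and "M p = 1" and "M q = 1"
  shows "4 - S \<le> norm (infsum f UNIV)"
proof -
  define R where "R = UNIV - {p, q}"
  have "f summable_on UNIV"
    by (rule abs_summable_summable[OF Infinite_Sum.abs_summable_on_comparison_test'
          [OF has_sum_imp_summable[OF M_sum] f_le]])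
  moreover have "(f has_sum (f p + f q)) {p, q}"
    using \<open>p \<noteq> q\<close> has_sum_finite[of "{p, q}" f] by simp
  ultimately have f_R: "(f has_sum (infsum f UNIV - (f p + f q))) R"
    unfolding R_def by (intro has_sum_Diff) (auto simp: summable_iff_has_sum_infsum)
  have "(M has_sum 2) {p, q}"
    using \<open>p \<noteq> q\<close> \<open>M p = 1\<close> \<open>M q = 1\<close> has_sum_finite[of "{p, q}" M] by simp
  then have M_R: "(M has_sum (S - 2)) R"
    unfolding R_def by (intro has_sum_Diff M_sum) auto
  have norm_R: "(\<lambda>n. norm (f n)) summable_on R"
    by (rule Infinite_Sum.abs_summable_on_comparison_test'[OF has_sum_imp_summable[OF M_R] f_le])
  have "norm (infsum f R) \<le> infsum (\<lambda>n. norm (f n)) R"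
    by (rule norm_infsum_bound[OF norm_R])
  also have "\<dots> \<le> S - 2"
    using infsum_mono[OF norm_R has_sum_imp_summable[OF M_R] f_le] infsumI[OF M_R] by simp
  finally have "norm (infsum f R) \<le> S - 2" .
  moreover have "2 = norm (infsum f UNIV - infsum f R)"
    using infsumI[OF f_R] \<open>f p = f q\<close> \<open>norm (f p) = 1\<close> by (simp add: scaleR_2[symmetric])
  moreover have "norm (infsum f UNIV - infsum f R) \<le> norm (infsum f UNIV) + norm (infsum f R)"
    by (rule norm_triangle_ineq4)
  ultimately show ?thesis by linarith
qed

lemma sums_exp_arith:
  fixes x c d :: real
  assumes "0 < x" "0 < c"
  shows "(\<lambda>k. exp (- x * (c * real k + d))) sums (exp (- x * d) / (1 - exp (- x * c)))"
proof -
  have "norm (exp (- x * c)) < 1" using assms by simp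
  from sums_mult[OF geometric_sums[OF this], of "exp (- x * d)"]
  have "(\<lambda>k. exp (- x * d) * exp (- x * c) ^ k) sums (exp (- x * d) / (1 - exp (- x * c)))"
    by simp
  moreover have "exp (- x * d) * exp (- x * c) ^ k = exp (- x * (c * real k + d))" for k
    by (simp add: exp_of_nat_mult[symmetric] exp_add[symmetric] algebra_simps)
  ultimately show ?thesis by simp
qed

lemma has_sum_exp_arith:
  fixes x c d :: real
  assumes "0 < x" "0 < c"
  shows "((\<lambda>k. exp (- x * (c * real k + d))) has_sum (exp (- x * d) / (1 - exp (- x * c)))) UNIV"
  by (rule sums_nonneg_imp_has_sum[OF sums_exp_arith[OF assms]]) simp

text \<open>The two index functions governing the decay of the theta terms in the two
  characteristics: \<open>\<bar>m + 1/2\<bar> = half_index m + 1/2\<close>, and \<open>odd_index m\<close> is the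
  lower bound \<open>2\<bar>m\<bar> - 1\<close> for \<open>m\<^sup>2\<close> at \<open>m \<noteq> 0\<close>.\<close>
definition half_index :: "int \<Rightarrow> int" where
  "half_index m = (if 0 \<le> m then m else - m - 1)"

definition odd_index :: "int \<Rightarrow> int" where
  "odd_index m = (if m = 0 then 0 else 2 * \<bar>m\<bar> - 1)"

lemma has_sum_exp_half_index:
  fixes x :: real
  assumes "0 < x"
  shows "((\<lambda>m. exp (- x * of_int (half_index m))) has_sum (2 / (1 - exp (- x)))) UNIV"
proof -
  have "((\<lambda>m. exp (- x * of_int (half_index m))) has_sum (1 / (1 - exp (- x)) + 1 / (1 - exp (- x)))) UNIV"
    by (rule has_sum_int_split)
       (use has_sum_exp_arith[OF assms, of 1 0] in \<open>simp_all add: half_index_def\<close>)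
  then show ?thesis by simp
qed

lemma has_sum_exp_abs:
  fixes x :: real
  assumes "0 < x"
  shows "((\<lambda>m. exp (- x * of_int \<bar>m\<bar>)) has_sum ((1 + exp (- x)) / (1 - exp (- x)))) UNIV"
proof -
  have "((\<lambda>m. exp (- x * of_int \<bar>m\<bar>)) has_sum (1 / (1 - exp (- x)) + exp (- x) / (1 - exp (- x)))) UNIV"
    by (rule has_sum_int_split)
       (use has_sum_exp_arith[OF assms, of 1 0] has_sum_exp_arith[OF assms, of 1 1] in \<open>simp_all add: add.commute\<close>)
  then show ?thesis by (simp add: add_divide_distrib)
qed

lemma has_sum_exp_odd_index:
  fixes x :: real
  assumes "0 < x"
  shows "((\<lambda>m. exp (- x * of_int (odd_index m)))
           has_sum (1 + 2 * exp (- x) / (1 - exp (- (2 * x))))) UNIV"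
proof -
  let ?g = "\<lambda>k::nat. exp (- x * of_int (odd_index (int k)))"
  have odd: "((\<lambda>k. exp (- x * (2 * real k + 1))) has_sum (exp (- x) / (1 - exp (- (2 * x))))) UNIV"
    using has_sum_exp_arith[OF assms, of 2 1] by (simp add: mult.commute)
  have "(\<lambda>k. ?g (Suc k)) sums (exp (- x) / (1 - exp (- (2 * x))))"
    using sums_exp_arith[OF assms, of 2 1] by (simp add: odd_index_def algebra_simps)
  then have "?g sums (exp (- x) / (1 - exp (- (2 * x))) + ?g 0)"
    by (rule sums_Suc_iff[THEN iffD1])
  then have "?g sums (exp (- x) / (1 - exp (- (2 * x))) + 1)"
    by (simp add: odd_index_def)
  then have "(?g has_sum (1 + exp (- x) / (1 - exp (- (2 * x))))) UNIV"
    by (subst add.commute, intro sums_nonneg_imp_has_sum) auto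
  then have "((\<lambda>m. exp (- x * of_int (odd_index m)))
      has_sum (1 + exp (- x) / (1 - exp (- (2 * x))) + exp (- x) / (1 - exp (- (2 * x))))) UNIV"
    by (rule has_sum_int_split) (use odd in \<open>simp add: odd_index_def algebra_simps\<close>)
  then show ?thesis by (simp add: add.commute)
qed

definition theta_term :: "real^2 \<Rightarrow> real^2 \<Rightarrow> complex^2 \<Rightarrow> complex^2^2 \<Rightarrow> int^2 \<Rightarrow> complex" where
  "theta_term a b Z \<tau> n = (let v = (\<chi> i. complex_of_real (of_int (n $ i) + a $ i)) in
      exp (2 * \<i> * of_real pi *
        ((1/2) * (\<Sum>i\<in>UNIV. \<Sum>j\<in>UNIV. v $ i * \<tau> $ i $ j * v $ j)
         + (\<Sum>i\<in>UNIV. v $ i * (Z $ i + complex_of_real (b $ i))))))"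

lemma theta_char_eq_infsum: "theta_char a b Z \<tau> = infsum (theta_term a b Z \<tau>) UNIV"
  unfolding theta_char_def theta_term_def ..

lemma norm_theta_term:
  assumes "\<tau>$2$1 = \<tau>$1$2"
  shows "norm (theta_term a b 0 \<tau> n)
    = exp (- pi * (Im (\<tau>$1$1) * (of_int (n$1) + a$1)^2
        + 2 * Im (\<tau>$1$2) * (of_int (n$1) + a$1) * (of_int (n$2) + a$2)
        + Im (\<tau>$2$2) * (of_int (n$2) + a$2)^2))"
  using assms
  by (simp add: theta_term_def Let_def sum_2 norm_exp_eq_Re algebra_simps power2_eq_square)

lemma theta_normalized_ge_one:
  fixes \<phi> \<psi> :: "int \<Rightarrow> real" and c :: real
  assumes "(\<phi> has_sum \<Phi>) UNIV" "(\<psi> has_sum \<Psi>) UNIV" "\<And>m. 0 \<le> \<phi> m" "\<And>m. 0 \<le> \<psi> m"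
    and "\<Phi> * \<Psi> \<le> 3"
    and "\<And>n. norm (theta_term a b Z \<tau> n) * exp c \<le> \<phi> (n$1) * \<psi> (n$2)"
    and "p \<noteq> q" and "theta_term a b Z \<tau> p = theta_term a b Z \<tau> q"
    and "norm (theta_term a b Z \<tau> p) * exp c = 1"
    and "\<phi> (p$1) * \<psi> (p$2) = 1" and "\<phi> (q$1) * \<psi> (q$2) = 1"
  shows "1 \<le> cmod (theta_char a b Z \<tau>) * exp c"
proof -
  let ?f = "\<lambda>n. theta_term a b Z \<tau> n * complex_of_real (exp c)"
  have "4 - \<Phi> * \<Psi> \<le> norm (infsum ?f UNIV)"
    by (rule norm_infsum_ge_two_dominant_terms[OF has_sum_int2_product[OF assms(1-4)], where p = p and q = q])
       (use assms(6-) in \<open>simp_all add: norm_mult\<close>)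
  then show ?thesis
    using \<open>\<Phi> * \<Psi> \<le> 3\<close> by (simp add: theta_char_eq_infsum infsum_cmult_left' norm_mult)
qed

lemma int_quadratic_nonneg_1:
  fixes P K :: int
  assumes "0 \<le> P" "0 \<le> K"
  shows "0 \<le> 2*P^2 + P - 2*P*K - 2*K + 2*K^2"
proof (cases "K \<le> 1")
  case True
  then have "K = 0 \<or> K = 1" using assms by auto
  moreover have "0 \<le> P*(P-1)" using assms by (cases "P = 0") simp_all
  ultimately show ?thesis using assms by (auto simp: power2_eq_square algebra_simps)
next
  case False
  then have "0 \<le> K^2 - 2*K" by (simp add: power2_eq_square algebra_simps)
  moreover have "2*P^2 + P - 2*P*K - 2*K + 2*K^2 = (P-K)^2 + (K^2 - 2*K) + P^2 + P"
    by (simp add: power2_eq_square algebra_simps)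
  ultimately show ?thesis using assms by (smt (verit) zero_le_power2)
qed

lemma int_quadratic_nonneg_2:
  fixes J P :: int
  assumes "1 \<le> J" "0 \<le> P"
  shows "0 \<le> 2*J^2 - 2*J*P - 3*J + 1 + 2*P^2"
proof (cases "J \<le> 2")
  case True
  then have "J = 1 \<or> J = 2" using assms by auto
  moreover have "0 \<le> P*(P-1)" using assms by (cases "P = 0") simp_all
  moreover have "0 \<le> (P-1)^2" by simp
  ultimately show ?thesis using assms by (auto simp: power2_eq_square algebra_simps)
next
  case False
  then have "0 \<le> J^2 - 3*J" by (simp add: power2_eq_square algebra_simps)
  moreover have "2*J^2 - 2*J*P - 3*J + 1 + 2*P^2 = (J-P)^2 + (J^2 - 3*J) + P^2 + 1"
    by (simp add: power2_eq_square algebra_simps)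
  ultimately show ?thesis by (smt (verit) zero_le_power2)
qed

lemma quadratic_form_bound_first:
  fixes m n :: int and y1 y2 c :: real
  assumes "0 \<le> c" "2*c \<le> y1" "y1 \<le> y2"
  shows "y1/2 * (of_int (half_index m) + of_int \<bar>n\<bar>)
    \<le> y1 * (of_int m + 1/2)^2 + 2*c * (of_int m + 1/2) * of_int n + y2 * (of_int n)^2 - y1/4"
proof -
  define P where "P = half_index m"
  have P0: "0 \<le> P" unfolding P_def half_index_def by auto
  have u: "\<bar>of_int m + 1/2\<bar> = (of_int P + 1/2 :: real)" unfolding P_def half_index_def by auto
  have sq1: "(of_int m + 1/2)^2 = (of_int P + 1/2 :: real)^2" by (metis u power2_abs)
  have sq2: "(of_int n)^2 = (of_int \<bar>n\<bar> :: real)^2" by simp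
  have "\<bar>2*c * (of_int m + 1/2) * of_int n\<bar> = 2*c * (of_int P + 1/2) * of_int \<bar>n\<bar>"
    using assms(1) u by (simp add: abs_mult)
  also have "\<dots> \<le> y1 * (of_int P + 1/2) * of_int \<bar>n\<bar>"
    using assms(2) P0 by (intro mult_right_mono) auto
  finally have cross: "- (y1 * (of_int P + 1/2) * of_int \<bar>n\<bar>) \<le> 2*c * (of_int m + 1/2) * of_int n"
    by linarith
  have "0 \<le> real_of_int (2*P^2 + P - 2*P*\<bar>n\<bar> - 2*\<bar>n\<bar> + 2*\<bar>n\<bar>^2)"
    using int_quadratic_nonneg_1[OF P0, of "\<bar>n\<bar>"] by (simp only: of_int_0_le_iff)
  then have "0 \<le> y1 * of_int (2*P^2 + P - 2*P*\<bar>n\<bar> - 2*\<bar>n\<bar> + 2*\<bar>n\<bar>^2)"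
    by (rule mult_nonneg_nonneg[rotated]) (use assms in linarith)
  moreover have "y1 * (of_int \<bar>n\<bar>)^2 \<le> y2 * (of_int \<bar>n\<bar>)^2"
    using assms(3) by (intro mult_right_mono) auto
  ultimately show ?thesis
    using cross sq1 sq2 unfolding P_def[symmetric] by (simp add: power2_eq_square algebra_simps)
qed

lemma quadratic_form_bound_second:
  fixes m n :: int and y1 y2 c :: real
  assumes "0 \<le> c" "2*c \<le> y1" "y1 \<le> y2"
  shows "y1/2 * of_int (odd_index m) + y2 * of_int (half_index n)
    \<le> y1 * (of_int m)^2 + 2*c * of_int m * (of_int n + 1/2) + y2 * (of_int n + 1/2)^2 - y2/4"
proof -
  define P where "P = half_index n"
  have P0: "0 \<le> P" unfolding P_def half_index_def by auto
  have u: "\<bar>of_int n + 1/2\<bar> = (of_int P + 1/2 :: real)" unfolding P_def half_index_def by auto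
  have sq1: "(of_int n + 1/2)^2 = (of_int P + 1/2 :: real)^2" by (metis u power2_abs)
  have sq2: "(of_int m)^2 = (of_int \<bar>m\<bar> :: real)^2" by simp
  have "\<bar>2*c * of_int m * (of_int n + 1/2)\<bar> = 2*c * of_int \<bar>m\<bar> * (of_int P + 1/2)"
    using assms(1) u by (simp add: abs_mult)
  also have "\<dots> \<le> y1 * of_int \<bar>m\<bar> * (of_int P + 1/2)"
    using assms(2) P0 by (intro mult_right_mono) auto
  finally have cross: "- (y1 * of_int \<bar>m\<bar> * (of_int P + 1/2)) \<le> 2*c * of_int m * (of_int n + 1/2)"
    by linarith
  have y2P: "y1 * (of_int P)^2 \<le> y2 * (of_int P)^2"
    using assms(3) by (intro mult_right_mono) auto
  show ?thesis
  proof (cases "m = 0")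
    case True
    have "0 \<le> y2 * (of_int P)^2" using assms by simp
    then show ?thesis using True sq1 unfolding P_def[symmetric] odd_index_def
      by (simp add: power2_eq_square algebra_simps)
  next
    case False
    then have "1 \<le> \<bar>m\<bar>" by auto
    from int_quadratic_nonneg_2[OF this P0]
    have "0 \<le> real_of_int (2*\<bar>m\<bar>^2 - 2*\<bar>m\<bar>*P - 3*\<bar>m\<bar> + 1 + 2*P^2)"
      by (simp only: of_int_0_le_iff)
    then have "0 \<le> y1 * of_int (2*\<bar>m\<bar>^2 - 2*\<bar>m\<bar>*P - 3*\<bar>m\<bar> + 1 + 2*P^2)"
      by (rule mult_nonneg_nonneg[rotated]) (use assms in linarith)
    then show ?thesis using False cross y2P sq1 sq2 unfolding P_def[symmetric] odd_index_def
      by (simp add: power2_eq_square algebra_simps)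
  qed
qed

lemma vec2_nth [simp]: "vec2 x y $ 1 = x" "vec2 x y $ 2 = y"
  by (simp_all add: vec2_def)

lemma exp_neg_le_pow:
  assumes "real k \<le> t"
  shows "exp (- t) \<le> (1000/2718) ^ k"
proof -
  have e: "2718/1000 \<le> exp (1::real)"
    using e_approx_32 by (simp add: abs_if split: if_splits)
  have "exp (- t) \<le> exp (- real k)" using assms by simp
  also have "\<dots> = inverse (exp 1) ^ k"
    using exp_of_nat_mult[of k "1::real"] by (simp add: exp_minus power_inverse)
  also have "\<dots> \<le> (1000/2718) ^ k"
    by (rule power_mono) (use e in \<open>auto simp: field_simps\<close>)
  finally show ?thesis .
qed

lemma exp_minus_one_ge: "100/272 \<le> exp (-1::real)"
  using e_less_272 by (simp add: exp_minus field_simps)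

lemma exp_half_pi_le_eighth:
  assumes "3/2 \<le> y"
  shows "exp (- (pi * y / 2)) \<le> 1/8"
proof -
  have "3 * (3/2) \<le> pi * y" by (rule mult_mono) (use pi_gt3 assms in auto)
  then have "exp (- (pi * y / 2)) \<le> exp (- real 2) * exp (- (1/4))"
    by (simp add: exp_add[symmetric])
  also have "\<dots> \<le> (1000/2718)^2 * (4/5)"
  proof (rule mult_mono)
    show "exp (- real 2) \<le> (1000/2718)^2" by (rule exp_neg_le_pow) simp
    have "1 + 1/4 \<le> exp (1/4::real)" by (rule exp_ge_add_one_self)
    then show "exp (- (1/4::real)) \<le> 4/5" by (simp add: exp_minus field_simps)
  qed auto
  also have "\<dots> \<le> 1/8" by (simp add: eval_nat_numeral)
  finally show ?thesis .
qed

lemma exp_half_pi_le: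
  assumes "1 \<le> y"
  shows "exp (- (pi * y / 2)) \<le> 213/1000"
proof -
  have "3141/1000 \<le> (3.141592653588::real)" by simp
  then have "3141/1000 \<le> pi" using pi_approx(1) by linarith
  then have "3141/1000 * 1 \<le> pi * y" by (rule mult_mono) (use assms in auto)
  then have "exp (- (pi * y / 2)) \<le> exp (- real 1) * exp (- (57/100))"
    by (simp add: exp_add[symmetric])
  also have "\<dots> \<le> (1000/2718) * (1 / (1 + 57/100 + (57/100)^2/2))"
  proof (rule mult_mono)
    show "exp (- real 1) \<le> 1000/2718" using exp_neg_le_pow[of 1] by simp
    have "1 + 57/100 + (57/100)^2/2 \<le> exp (57/100::real)"
      by (rule exp_lower_Taylor_quadratic) simp
    then show "exp (- (57/100::real)) \<le> 1 / (1 + 57/100 + (57/100)^2/2)"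
      by (simp add: exp_minus field_simps)
  qed auto
  also have "\<dots> \<le> 213/1000" by (simp add: eval_nat_numeral)
  finally show ?thesis .
qed

lemma exp_pi_le:
  assumes "3/2 \<le> y"
  shows "exp (- (pi * y)) \<le> 1/50"
proof -
  have "3 * (3/2) \<le> pi * y" by (rule mult_mono) (use pi_gt3 assms in auto)
  then have "exp (- (pi * y)) \<le> (1000/2718)^4" by (intro exp_neg_le_pow) simp
  also have "\<dots> \<le> 1/50" by (simp add: eval_nat_numeral)
  finally show ?thesis .
qed

lemma theta_first_half_ge_one:
  fixes \<tau> :: "complex^2^2" and b :: "real^2"
  assumes sym: "\<tau>$2$1 = \<tau>$1$2" and reduced: "0 \<le> Im (\<tau>$1$2)" "2 * Im (\<tau>$1$2) \<le> Im (\<tau>$1$1)"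
      "Im (\<tau>$1$1) \<le> Im (\<tau>$2$2)"
    and y1: "3/2 \<le> Im (\<tau>$1$1)" and b1: "b$1 = 0"
  shows "1 \<le> cmod (theta_char (vec2 (1/2) 0) b 0 \<tau>) * exp (pi * Im (\<tau>$1$1) / 4)"
proof -
  define y where "y = Im (\<tau>$1$1)"
  define x where "x = pi * y / 2"
  define \<rho> where "\<rho> = exp (- x)"
  have "0 < x" unfolding x_def y_def using y1 by simp
  have \<rho>: "0 < \<rho>" "\<rho> \<le> 1/8"
    unfolding \<rho>_def x_def y_def using exp_half_pi_le_eighth[OF y1] by simp_all
  have major: "norm (theta_term (vec2 (1/2) 0) b 0 \<tau> n) * exp (pi * y / 4)
      \<le> exp (- x * of_int (half_index (n$1))) * exp (- x * of_int \<bar>n$2\<bar>)" for n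
  proof -
    define m k where "m = n$1" and "k = n$2"
    have "y/2 * (of_int (half_index m) + of_int \<bar>k\<bar>) \<le> y * (of_int m + 1/2)^2
        + 2 * Im (\<tau>$1$2) * (of_int m + 1/2) * of_int k + Im (\<tau>$2$2) * (of_int k)^2 - y/4"
      using quadratic_form_bound_first reduced unfolding y_def by blast
    then have "exp (- pi * (y * (of_int m + 1/2)^2 + 2 * Im (\<tau>$1$2) * (of_int m + 1/2) * of_int k
        + Im (\<tau>$2$2) * (of_int k)^2 - y/4)) \<le> exp (- pi * (y/2 * (of_int (half_index m) + of_int \<bar>k\<bar>)))"
      by simp
    then show ?thesis
      using norm_theta_term[OF sym, where a = "vec2 (1/2) 0" and b = b and n = n]
      by (simp add: m_def k_def x_def y_def exp_add[symmetric] algebra_simps)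
  qed
  have mass: "2 / (1 - \<rho>) * ((1 + \<rho>) / (1 - \<rho>)) \<le> 3"
  proof -
    have "2 + 2 * \<rho> \<le> 3 - 6 * \<rho> + 3 * (\<rho> * \<rho>)"
      using \<rho> zero_le_square[of \<rho>] by linarith
    then have "2 * (1 + \<rho>) \<le> 3 * (1 - \<rho>)^2"
      by (simp add: power2_eq_square algebra_simps)
    then show ?thesis using \<rho> by (simp add: field_simps power2_eq_square)
  qed
  show ?thesis
    by (rule theta_normalized_ge_one[OF has_sum_exp_half_index[OF \<open>0 < x\<close>]
          has_sum_exp_abs[OF \<open>0 < x\<close>] _ _ mass[unfolded \<rho>_def] major[unfolded y_def],
          where p = 0 and q = "\<chi> i. if i = 1 then -1 else 0"])
       (use b1 sym in \<open>auto simp: vec_eq_iff half_index_def theta_term_def Let_def sum_2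
          norm_theta_term exp_add[symmetric] algebra_simps power2_eq_square\<close>)
qed

lemma theta_second_half_ge_one:
  fixes \<tau> :: "complex^2^2" and b :: "real^2"
  assumes sym: "\<tau>$2$1 = \<tau>$1$2" and reduced: "0 \<le> Im (\<tau>$1$2)" "2 * Im (\<tau>$1$2) \<le> Im (\<tau>$1$1)"
      "Im (\<tau>$1$1) \<le> Im (\<tau>$2$2)"
    and y1: "1 \<le> Im (\<tau>$1$1)" and y2: "3/2 \<le> Im (\<tau>$2$2)" and b2: "b$2 = 0"
  shows "1 \<le> cmod (theta_char (vec2 0 (1/2)) b 0 \<tau>) * exp (pi * Im (\<tau>$2$2) / 4)"
proof -
  define y w where "y = Im (\<tau>$1$1)" and "w = Im (\<tau>$2$2)"
  define x z where "x = pi * y / 2" and "z = pi * w"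
  define s r where "s = exp (- x)" and "r = exp (- z)"
  have "0 < x" "0 < z" unfolding x_def y_def z_def w_def using y1 y2 by simp_all
  have s: "0 < s" "s \<le> 213/1000"
    unfolding s_def x_def y_def using exp_half_pi_le[OF y1] by simp_all
  have r: "r \<le> 1/50"
    unfolding r_def z_def w_def using exp_pi_le[OF y2] by simp
  have major: "norm (theta_term (vec2 0 (1/2)) b 0 \<tau> n) * exp (pi * w / 4)
      \<le> exp (- x * of_int (odd_index (n$1))) * exp (- z * of_int (half_index (n$2)))" for n
  proof -
    define m k where "m = n$1" and "k = n$2"
    have "y/2 * of_int (odd_index m) + w * of_int (half_index k) \<le> y * (of_int m)^2
        + 2 * Im (\<tau>$1$2) * of_int m * (of_int k + 1/2) + w * (of_int k + 1/2)^2 - w/4"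
      using quadratic_form_bound_second reduced unfolding y_def w_def by blast
    then have "exp (- pi * (y * (of_int m)^2 + 2 * Im (\<tau>$1$2) * of_int m * (of_int k + 1/2)
        + w * (of_int k + 1/2)^2 - w/4))
        \<le> exp (- pi * (y/2 * of_int (odd_index m) + w * of_int (half_index k)))"
      by simp
    then show ?thesis
      using norm_theta_term[OF sym, where a = "vec2 0 (1/2)" and b = b and n = n]
      by (simp add: m_def k_def x_def z_def y_def w_def exp_add[symmetric] algebra_simps)
  qed
  have mass: "(1 + 2 * s / (1 - s * s)) * (2 / (1 - r)) \<le> 3"
  proof -
    have "s * s \<le> (213/1000) * (213/1000)" by (rule mult_mono) (use s in auto)
    then have "2 * s / (1 - s * s) \<le> 9/20" using s by (simp add: divide_le_eq)
    moreover have "2 / (1 - r) \<le> 100/49" using r by (simp add: divide_le_eq)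
    ultimately have "(1 + 2 * s / (1 - s * s)) * (2 / (1 - r)) \<le> (1 + 9/20) * (100/49)"
      using r s by (intro mult_mono) (auto simp: divide_le_eq)
    then show ?thesis by (rule order_trans) simp
  qed
  have "exp (- (2 * x)) = s * s" unfolding s_def by (simp add: exp_add[symmetric])
  then show ?thesis
    by (intro theta_normalized_ge_one[OF has_sum_exp_odd_index[OF \<open>0 < x\<close>]
          has_sum_exp_half_index[OF \<open>0 < z\<close>] _ _ _ major[unfolded w_def],
          where p = 0 and q = "\<chi> i. if i = 1 then 0 else -1"])
       (use b2 sym mass in \<open>auto simp: vec_eq_iff half_index_def odd_index_def theta_term_def
          Let_def sum_2 norm_theta_term exp_add[symmetric] algebra_simps power2_eq_square
          s_def r_def intro: exI[of _ 2]\<close>)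
qed

lemma theta_lower_bound_le:
  assumes "0 \<le> y1" "0 \<le> y2"
  shows "theta_lower_bound y1 y2 \<le> 3 - (1 + (1 + sqrt 6 / sqrt y1) * exp (- pi * y1 / 6))
                                      * (2 + (1 + 2 / sqrt y2) * exp (- pi * y2 / 4))"
proof -
  have "0 \<le> (2 + sqrt 2 / sqrt y2) * exp (- pi * y2 / 2)"
    and "0 \<le> (1 + (1 + sqrt 2 / sqrt y2) * exp (- pi * y2 / 2)) * exp (- 2 * pi * y1)"
    using assms by (intro mult_nonneg_nonneg add_nonneg_nonneg; simp)+
  moreover have "0 \<le> exp (- pi * y2)" by simp
  ultimately show ?thesis unfolding theta_lower_bound_def by linarith
qed

lemma theta_lower_bound_le_one:
  assumes "0 \<le> y1" "0 \<le> y2"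
  shows "theta_lower_bound y1 y2 \<le> 1"
proof -
  have "1 * 2 \<le> (1 + (1 + sqrt 6 / sqrt y1) * exp (- pi * y1 / 6))
                 * (2 + (1 + 2 / sqrt y2) * exp (- pi * y2 / 4))"
    using assms by (intro mult_mono add_increasing2 mult_nonneg_nonneg add_nonneg_nonneg) auto
  with theta_lower_bound_le[OF assms] show ?thesis by linarith
qed

text \<open>For \<open>y1 \<le> 3/2\<close> the first error term exceeds \<open>1\<close>, so the bound is non-positive.\<close>
lemma theta_lower_bound_nonpos_first:
  assumes "0 < y1" "y1 \<le> 3/2" "0 \<le> y2"
  shows "theta_lower_bound y1 y2 \<le> 0"
proof -
  have "2 * sqrt y1 = sqrt (4 * y1)" by (simp add: real_sqrt_mult)
  also have "\<dots> \<le> sqrt 6" using assms by simp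
  finally have "2 \<le> sqrt 6 / sqrt y1" using assms by (simp add: le_divide_eq)
  moreover have "pi * y1 \<le> 4 * (3/2)" by (rule mult_mono) (use pi_less_4 assms in auto)
  then have "exp (-1) \<le> exp (- pi * y1 / 6)" by simp
  then have "100/272 \<le> exp (- pi * y1 / 6)" using exp_minus_one_ge by linarith
  ultimately have "(1 + 2) * (100/272) \<le> (1 + sqrt 6 / sqrt y1) * exp (- pi * y1 / 6)"
    by (intro mult_mono) auto
  then have "1 \<le> (1 + sqrt 6 / sqrt y1) * exp (- pi * y1 / 6)"
    by (rule order_trans[rotated]) simp
  then have "2 * 2 \<le> (1 + (1 + sqrt 6 / sqrt y1) * exp (- pi * y1 / 6))
                 * (2 + (1 + 2 / sqrt y2) * exp (- pi * y2 / 4))"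
    using assms by (intro mult_mono) auto
  with theta_lower_bound_le[of y1 y2] assms show ?thesis by linarith
qed

text \<open>For \<open>y2 \<le> 1\<close> the second error term exceeds \<open>1\<close>, so the bound is non-positive.\<close>
lemma theta_lower_bound_nonpos_second:
  assumes "0 \<le> y1" "0 < y2" "y2 \<le> 1"
  shows "theta_lower_bound y1 y2 \<le> 0"
proof -
  have "2 \<le> 2 / sqrt y2" using assms by (simp add: le_divide_eq)
  moreover have "pi * y2 \<le> 4 * 1" by (rule mult_mono) (use pi_less_4 assms in auto)
  then have "exp (-1) \<le> exp (- pi * y2 / 4)" by simp
  then have "100/272 \<le> exp (- pi * y2 / 4)" using exp_minus_one_ge by linarith
  ultimately have "(1 + 2) * (100/272) \<le> (1 + 2 / sqrt y2) * exp (- pi * y2 / 4)"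
    by (intro mult_mono) auto
  then have "1 \<le> (1 + 2 / sqrt y2) * exp (- pi * y2 / 4)"
    by (rule order_trans[rotated]) simp
  then have "1 * 3 \<le> (1 + (1 + sqrt 6 / sqrt y1) * exp (- pi * y1 / 6))
                 * (2 + (1 + 2 / sqrt y2) * exp (- pi * y2 / 4))"
    using assms by (intro mult_mono) auto
  with theta_lower_bound_le[of y1 y2] assms show ?thesis by linarith
qed

lemma theta_lower_bound_pos:
  assumes "4 \<le> y1" "y1 \<le> y2"
  shows "0 < theta_lower_bound y1 y2"
proof -
  have "4 \<le> y2" using assms by linarith
  have "2 \<le> sqrt y1" "2 \<le> sqrt y2"
    using real_sqrt_le_mono[OF assms(1)] real_sqrt_le_mono[OF \<open>4 \<le> y2\<close>] by simp_all
  moreover have "sqrt 6 \<le> 5/2" "sqrt 2 \<le> 2" by (rule real_le_lsqrt; simp add: power2_eq_square)+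
  ultimately have roots: "sqrt 6 / sqrt y1 \<le> 5/4" "2 / sqrt y2 \<le> 1" "sqrt 2 / sqrt y2 \<le> 1"
    using assms \<open>4 \<le> y2\<close> by (simp_all add: divide_le_eq)
  have "3 * 4 \<le> pi * y1" "3 * 4 \<le> pi * y2"
    using assms \<open>4 \<le> y2\<close> pi_gt3 by (intro mult_mono; simp)+
  then have decay: "exp (- pi * y1 / 6) \<le> (1000/2718)^2" "exp (- pi * y2 / 4) \<le> (1000/2718)^3"
      "exp (- pi * y2 / 2) \<le> (1000/2718)^6" "exp (- pi * y2) \<le> (1000/2718)^12"
      "exp (- 2 * pi * y1) \<le> (1000/2718)^24"
    using exp_neg_le_pow[of 2 "pi * y1 / 6"] exp_neg_le_pow[of 3 "pi * y2 / 4"]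
      exp_neg_le_pow[of 6 "pi * y2 / 2"] exp_neg_le_pow[of 12 "pi * y2"]
      exp_neg_le_pow[of 24 "2 * pi * y1"]
    by simp_all
  have X: "(1 + sqrt 6 / sqrt y1) * exp (- pi * y1 / 6) \<le> 61/200"
  proof -
    have "(1 + sqrt 6 / sqrt y1) * exp (- pi * y1 / 6) \<le> (1 + 5/4) * (1000/2718)^2"
      by (rule mult_mono) (use roots decay in auto)
    then show ?thesis by (simp add: eval_nat_numeral)
  qed
  have Y: "(1 + 2 / sqrt y2) * exp (- pi * y2 / 4) \<le> 1/10"
  proof -
    have "(1 + 2 / sqrt y2) * exp (- pi * y2 / 4) \<le> (1 + 1) * (1000/2718)^3"
      by (rule mult_mono) (use roots decay in auto)
    then show ?thesis by (simp add: eval_nat_numeral)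
  qed
  have C: "(2 + sqrt 2 / sqrt y2) * exp (- pi * y2 / 2) \<le> 1/100"
  proof -
    have "(2 + sqrt 2 / sqrt y2) * exp (- pi * y2 / 2) \<le> (2 + 1) * (1000/2718)^6"
      by (rule mult_mono) (use roots decay in auto)
    then show ?thesis by (simp add: eval_nat_numeral)
  qed
  have E: "(1 + (1 + sqrt 2 / sqrt y2) * exp (- pi * y2 / 2)) * exp (- 2 * pi * y1) \<le> 1/100"
  proof -
    have "(1 + sqrt 2 / sqrt y2) * exp (- pi * y2 / 2) \<le> (1 + 1) * (1000/2718)^6"
      by (rule mult_mono) (use roots decay in auto)
    then have "(1 + (1 + sqrt 2 / sqrt y2) * exp (- pi * y2 / 2)) * exp (- 2 * pi * y1)
        \<le> (1 + (1 + 1) * (1000/2718)^6) * (1000/2718)^24"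
      by (intro mult_mono) (use decay in auto)
    then show ?thesis by (simp add: eval_nat_numeral)
  qed
  have e: "exp (- pi * y2) \<le> 1/100"
    using decay(4) by (simp add: eval_nat_numeral)
  have P: "(1 + (1 + sqrt 6 / sqrt y1) * exp (- pi * y1 / 6)) * (2 + (1 + 2 / sqrt y2) * exp (- pi * y2 / 4))
      \<le> (1 + 61/200) * (2 + 1/10)"
    by (rule mult_mono) (use X Y assms in auto)
  have "0 < 4 - p - (1 + c) - e - r"
    if "p \<le> (1 + 61/200) * (2 + 1/10)" "c \<le> 1/100" "e \<le> 1/100" "r \<le> 1/100" for p c e r :: real
    using that by simp
  from this[OF P C e E] show ?thesis unfolding theta_lower_bound_def .
qed

lemma char_quadratic_form:
  "vec2 (1/2) 0 \<bullet> (Im_mat \<tau> *v vec2 (1/2) 0) = Im (\<tau>$1$1) / 4"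
  "vec2 0 (1/2) \<bullet> (Im_mat \<tau> *v vec2 0 (1/2)) = Im (\<tau>$2$2) / 4"
  by (simp_all add: inner_vec_def sum_2 matrix_vector_mult_def Im_mat_def)

text \<open>What the argument uses from \<open>\<tau> \<in> F\<^sub>2\<close>: symmetry, \<open>Im \<tau>\<^sub>1 > 0\<close>, and reducedness of \<open>Im \<tau>\<close>.\<close>
lemma F2_reduced:
  assumes "\<tau> \<in> F2"
  shows "\<tau>$2$1 = \<tau>$1$2" "0 < Im (\<tau>$1$1)" "Im (\<tau>$1$1) \<le> Im (\<tau>$2$2)"
    "2 * Im (\<tau>$1$2) \<le> Im (\<tau>$1$1)" "0 \<le> Im (\<tau>$1$2)"
proof -
  have H: "\<tau> \<in> siegel_H2" using assms by (simp add: F2_def)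
  then have "transpose \<tau> $ 2 $ 1 = \<tau> $ 2 $ 1" by (simp add: siegel_H2_def)
  then show "\<tau>$2$1 = \<tau>$1$2" by (simp add: transpose_def)
  have "axis 1 1 \<bullet> (Im_mat \<tau> *v axis 1 (1::real)) > 0"
    using H by (simp add: siegel_H2_def axis_eq_0_iff)
  then show "0 < Im (\<tau>$1$1)"
    by (simp add: inner_vec_def sum_2 matrix_vector_mult_def Im_mat_def axis_def)
  show "Im (\<tau>$1$1) \<le> Im (\<tau>$2$2)" "2 * Im (\<tau>$1$2) \<le> Im (\<tau>$1$1)" "0 \<le> Im (\<tau>$1$2)"
    using assms by (simp_all add: F2_def)
qed

text \<open>The bound for \<open>a = (1/2, 0)\<close>: below \<open>Im \<tau>\<^sub>1 = 3/2\<close> it is non-positive, above it the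
  normalised theta value is at least \<open>1\<close>, which is more than the bound.\<close>
lemma theta_bound_first_half:
  assumes "\<tau> \<in> F2" "b$1 = 0"
  shows "theta_lower_bound (Im (\<tau>$1$1)) (Im (\<tau>$2$2))
    \<le> cmod (theta_char (vec2 (1/2) 0) b 0 \<tau>) * exp (pi * (vec2 (1/2) 0 \<bullet> (Im_mat \<tau> *v vec2 (1/2) 0)))"
proof (cases "Im (\<tau>$1$1) \<le> 3/2")
  case True
  then have "theta_lower_bound (Im (\<tau>$1$1)) (Im (\<tau>$2$2)) \<le> 0"
    using F2_reduced[OF assms(1)] by (intro theta_lower_bound_nonpos_first) auto
  then show ?thesis by (smt (verit) mult_nonneg_nonneg norm_ge_zero exp_ge_zero)
next
  case False
  then have "1 \<le> cmod (theta_char (vec2 (1/2) 0) b 0 \<tau>) * exp (pi * Im (\<tau>$1$1) / 4)"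
    using F2_reduced[OF assms(1)] assms(2) by (intro theta_first_half_ge_one) auto
  moreover have "theta_lower_bound (Im (\<tau>$1$1)) (Im (\<tau>$2$2)) \<le> 1"
    using F2_reduced[OF assms(1)] by (intro theta_lower_bound_le_one) auto
  ultimately show ?thesis by (simp add: char_quadratic_form)
qed

lemma theta_bound_second_half:
  assumes "\<tau> \<in> F2" "b$2 = 0"
  shows "theta_lower_bound (Im (\<tau>$2$2)) (Im (\<tau>$1$1))
    \<le> cmod (theta_char (vec2 0 (1/2)) b 0 \<tau>) * exp (pi * (vec2 0 (1/2) \<bullet> (Im_mat \<tau> *v vec2 0 (1/2))))"
proof (cases "Im (\<tau>$2$2) \<le> 3/2 \<or> Im (\<tau>$1$1) \<le> 1")
  case True
  then have "theta_lower_bound (Im (\<tau>$2$2)) (Im (\<tau>$1$1)) \<le> 0"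
    using F2_reduced[OF assms(1)]
    by (auto intro: theta_lower_bound_nonpos_first theta_lower_bound_nonpos_second)
  then show ?thesis by (smt (verit) mult_nonneg_nonneg norm_ge_zero exp_ge_zero)
next
  case False
  then have "1 \<le> cmod (theta_char (vec2 0 (1/2)) b 0 \<tau>) * exp (pi * Im (\<tau>$2$2) / 4)"
    using F2_reduced[OF assms(1)] assms(2) by (intro theta_second_half_ge_one) auto
  moreover have "theta_lower_bound (Im (\<tau>$2$2)) (Im (\<tau>$1$1)) \<le> 1"
    using F2_reduced[OF assms(1)] by (intro theta_lower_bound_le_one) auto
  ultimately show ?thesis by (simp add: char_quadratic_form)
qed

theorem mainTheorem14:
  fixes \<tau> :: "complex^2^2"
  assumes "\<tau> \<in> F2"
  shows "(\<forall>(a, b) \<in> {(vec2 (1/2) 0, vec2 0 0), (vec2 (1/2) 0, vec2 0 (1/2))}.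
            cmod (theta_char a b 0 \<tau>) * exp (pi * (a \<bullet> (Im_mat \<tau> *v a)))
              \<ge> theta_lower_bound (Im (\<tau> $ 1 $ 1)) (Im (\<tau> $ 2 $ 2)))
       \<and> (Im (\<tau> $ 1 $ 1) \<ge> 4 \<longrightarrow> theta_lower_bound (Im (\<tau> $ 1 $ 1)) (Im (\<tau> $ 2 $ 2)) > 0)
       \<and> (\<forall>(a, b) \<in> {(vec2 0 (1/2), vec2 0 0), (vec2 0 (1/2), vec2 (1/2) 0)}.
            cmod (theta_char a b 0 \<tau>) * exp (pi * (a \<bullet> (Im_mat \<tau> *v a)))
              \<ge> theta_lower_bound (Im (\<tau> $ 2 $ 2)) (Im (\<tau> $ 1 $ 1)))"
  using theta_bound_first_half[OF assms, of "vec2 0 0"] theta_bound_first_half[OF assms, of "vec2 0 (1/2)"]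
    theta_bound_second_half[OF assms, of "vec2 0 0"] theta_bound_second_half[OF assms, of "vec2 (1/2) 0"]
    theta_lower_bound_pos F2_reduced(3)[OF assms]
  by auto

end
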